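(* Under the standing assumptions below, for every $t>0$ one has $\mathbb P\big(\{\zeta_t=1\}\,\Delta\,\{\tau\le t\}\big)=0$. Consequently $\tau$ is a stopping time with respect to $\mathbb F^{\zeta,c}$, and hence also with respect to $\mathbb F^{\zeta,c}_+$.
   Context: $(\Omega,\mathcal F,\mathbb P)$ is a complete probability space with null sets $\mathcal N_P$. $\gamma=(\gamma_t,t\ge0)$ is a standard gamma process (driftless subordinator, $\gamma_0=0$, càdlàg, $\mathbb E[e^{-\lambda\gamma_t}]=(1+\lambda)^{-t}$). $\tau:\Omega\to(0,+\infty)$ is a strictly positive random variable, independent of $\gamma$, with distribution function $F(t)=\mathbb P(\tau\le t)$ and law $\mathbb P_\tau$. The gamma bridge with random length $\tau$ is $\zeta_t:=\gamma_{t\wedge\tau}/\gamma_\tau$, $t\ge0$. $\Delta$ is symmetric difference. For a process $Y$: $\mathcal F^Y_t=\sigma(Y_s,s\le t)$, $\mathcal F^{Y,c}_t=\mathcal F^Y_t\vee\mathcal N_P$, and $\mathbb F^{Y,c}_+=(\bigcap_{s>t}\mathcal F^{Y,c}_s)_{t\ge0}$. *)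

theory Defs
  imports "HOL-Probability.Probability"
begin

definition gamma_process :: "'a measure \<Rightarrow> (real \<Rightarrow> 'a \<Rightarrow> real) \<Rightarrow> bool" where
  "gamma_process M g \<longleftrightarrow>
     (\<forall>t\<ge>0. g t \<in> borel_measurable M) \<and>
     (\<forall>\<omega>\<in>space M. g 0 \<omega> = 0) \<and>
     (\<forall>\<omega>\<in>space M. mono_on {0..} (\<lambda>s. g s \<omega>)) \<and>
     (\<forall>\<omega>\<in>space M. \<forall>t\<ge>0. ((\<lambda>s. g s \<omega>) \<longlongrightarrow> g t \<omega>) (at_right t)) \<and>
     (\<forall>\<omega>\<in>space M. \<forall>t>0. \<exists>l. ((\<lambda>s. g s \<omega>) \<longlongrightarrow> l) (at_left t)) \<and>
     (\<forall>(n::nat) (ts::nat \<Rightarrow> real). 0 \<le> ts 0 \<and> (\<forall>i<n. ts i < ts (Suc i)) \<longrightarrow>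
        prob_space.indep_vars M (\<lambda>_. borel) (\<lambda>i \<omega>. g (ts (Suc i)) \<omega> - g (ts i) \<omega>) {..<n}) \<and>
     (\<forall>s t l. 0 \<le> s \<and> s \<le> t \<and> 0 \<le> l \<longrightarrow>
        prob_space.expectation M (\<lambda>\<omega>. exp (- l * (g t \<omega> - g s \<omega>))) = (1 + l) powr (- (t - s)))"

definition gamma_bridge :: "(real \<Rightarrow> 'a \<Rightarrow> real) \<Rightarrow> ('a \<Rightarrow> real) \<Rightarrow> real \<Rightarrow> 'a \<Rightarrow> real" where
  "gamma_bridge g \<tau> t \<omega> = g (min t (\<tau> \<omega>)) \<omega> / g (\<tau> \<omega>) \<omega>"

text \<open>Completed natural filtration F^{Y,c}_t = sigma(Y_s, 0 <= s <= t) v N_P.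
  (For t < 0 the generating family of Y-events is empty.)\<close>
definition completed_nat_filtration :: "'a measure \<Rightarrow> (real \<Rightarrow> 'a \<Rightarrow> real) \<Rightarrow> real \<Rightarrow> 'a measure" where
  "completed_nat_filtration M Y t =
     sigma (space M) ((\<Union>s\<in>{0..t}. {Y s -` B \<inter> space M | B. B \<in> sets borel}) \<union> null_sets M)"

definition completed_nat_filtration_plus :: "'a measure \<Rightarrow> (real \<Rightarrow> 'a \<Rightarrow> real) \<Rightarrow> real \<Rightarrow> 'a measure" where
  "completed_nat_filtration_plus M Y t =
     sigma (space M) (\<Inter>s\<in>{t<..}. sets (completed_nat_filtration M Y s))"

end

theory Submission
  imports Defs "HOL-Real_Asymp.Real_Asymp"
begin

text \<open>
  Paths of a gamma process are nondecreasing, and on any interval [s, u] with s < u they increase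
  almost surely, because P(gamma_u = gamma_s) is bounded by every Laplace transform value
  (1 + l) powr -(u - s), which tends to 0 as l grows. Taking countably many rational intervals,
  almost every path is strictly increasing right after 0 and right after t. Hence, almost surely,
  gamma_tau > 0 (so zeta_t = 1 when tau \<le> t) and gamma_t < gamma_tau when t < tau (so zeta_t < 1).
  The event {tau \<le> t} thus differs from the F^zeta_t-event {zeta_t = 1} by a null set, and lies
  in the completed filtration.
\<close>

lemma gamma_process_mono:
  assumes "gamma_process M g" "\<omega> \<in> space M" "0 \<le> a" "a \<le> b"
  shows "g a \<omega> \<le> g b \<omega>"
  using assms unfolding gamma_process_def mono_on_def by auto

lemma gamma_process_AE_increment_nonzero:
  assumes "prob_space M" and G: "gamma_process M g" and "0 \<le> s" "s < u"
  shows "AE \<omega> in M. g u \<omega> \<noteq> g s \<omega>"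
proof -
  interpret prob_space M by fact
  define A where "A = {\<omega>\<in>space M. g u \<omega> = g s \<omega>}"
  have meas: "g u \<in> borel_measurable M" "g s \<in> borel_measurable M"
    using G assms(3,4) unfolding gamma_process_def by auto
  then have A: "A \<in> sets M" unfolding A_def by measurable
  have bound: "measure M A \<le> (1 + l) powr (- (u - s))" if "0 \<le> l" for l
  proof -
    let ?f = "\<lambda>\<omega>. exp (- l * (g u \<omega> - g s \<omega>))"
    have f_le_1: "?f \<omega> \<le> 1" if "\<omega> \<in> space M" for \<omega>
      using \<open>0 \<le> l\<close> gamma_process_mono[OF G that \<open>0 \<le> s\<close>] assms(4)
      by simp
    have int: "integrable M ?f"
      by (rule integrable_const_bound[where B=1]) (use f_le_1 meas in auto)
    have "measure M A = expectation (indicator A)" using A by simp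
    also have "\<dots> \<le> expectation ?f"
      using A by (intro integral_mono[OF _ int])
        (auto simp: indicator_def A_def less_top[symmetric] intro!: integrable_real_indicator)
    also have "\<dots> = (1 + l) powr (- (u - s))"
      using G assms(3,4) \<open>0 \<le> l\<close> unfolding gamma_process_def by auto
    finally show ?thesis .
  qed
  have lim: "((\<lambda>l::real. (1 + l) powr (- (u - s))) \<longlongrightarrow> 0) at_top"
    using assms(4) by real_asymp
  have "measure M A \<le> 0"
    by (rule tendsto_le[OF _ lim tendsto_const])
       (use bound in \<open>auto intro!: eventually_mono[OF eventually_ge_at_top[of 0]]\<close>)
  then have "A \<in> null_sets M"
    using A measure_nonneg[of M A] by (auto simp: emeasure_eq_measure)
  then have "AE \<omega> in M. \<omega> \<notin> A" by (rule AE_not_in)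
  then show ?thesis by (rule AE_mp) (auto simp: A_def intro!: AE_I2)
qed

lemma gamma_process_AE_strict_increase_after:
  assumes "prob_space M" and G: "gamma_process M g" and "0 \<le> t"
  shows "AE \<omega> in M. \<forall>s>t. g t \<omega> < g s \<omega>"
proof -
  have "AE \<omega> in M. \<forall>q::rat. t < of_rat q \<longrightarrow> g (of_rat q) \<omega> \<noteq> g t \<omega>"
    unfolding AE_all_countable
    using gamma_process_AE_increment_nonzero[OF assms(1,2,3)] by auto
  then show ?thesis
  proof (rule AE_mp, intro AE_I2 impI allI)
    fix \<omega> s
    assume \<omega>: "\<omega> \<in> space M" and rat: "\<forall>q::rat. t < of_rat q \<longrightarrow> g (of_rat q) \<omega> \<noteq> g t \<omega>"
      and "t < s"
    obtain q where q: "t < of_rat q" "of_rat q < s" using of_rat_dense[OF \<open>t < s\<close>] by blast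
    have "g t \<omega> \<le> g (of_rat q) \<omega>"
      using q by (intro gamma_process_mono[OF G \<omega> \<open>0 \<le> t\<close>]) simp
    moreover have "g (of_rat q) \<omega> \<le> g s \<omega>"
      using q \<open>0 \<le> t\<close> by (intro gamma_process_mono[OF G \<omega>]) linarith+
    ultimately show "g t \<omega> < g s \<omega>" using rat q by force
  qed
qed

lemma gamma_bridge_eq_1_sym_diff_null:
  assumes "prob_space M" "complete_measure M" and G: "gamma_process M g"
    and \<tau>_pos: "\<forall>\<omega>\<in>space M. 0 < \<tau> \<omega>" and "0 < t"
  shows "({\<omega>\<in>space M. gamma_bridge g \<tau> t \<omega> = 1} - {\<omega>\<in>space M. \<tau> \<omega> \<le> t}) \<union>
         ({\<omega>\<in>space M. \<tau> \<omega> \<le> t} - {\<omega>\<in>space M. gamma_bridge g \<tau> t \<omega> = 1}) \<in> null_sets M"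
    (is "?D \<in> _")
proof -
  interpret complete_measure M by fact
  have "AE \<omega> in M. (\<forall>s>0. g 0 \<omega> < g s \<omega>) \<and> (\<forall>s>t. g t \<omega> < g s \<omega>)"
    using gamma_process_AE_strict_increase_after[OF assms(1) G] \<open>0 < t\<close> by auto
  then have null: "{\<omega>\<in>space M. \<not> ((\<forall>s>0. g 0 \<omega> < g s \<omega>) \<and> (\<forall>s>t. g t \<omega> < g s \<omega>))}
      \<in> null_sets M"
    unfolding AE_iff_null_sets .
  have "\<omega> \<notin> ?D" if \<omega>: "\<omega> \<in> space M" and "\<forall>s>0. g 0 \<omega> < g s \<omega>" "\<forall>s>t. g t \<omega> < g s \<omega>"
    for \<omega>
  proof -
    have "g 0 \<omega> = 0" using G \<omega> unfolding gamma_process_def by auto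
    then have "0 < g (\<tau> \<omega>) \<omega>" using that \<tau>_pos by auto
    moreover have "g t \<omega> < g (\<tau> \<omega>) \<omega>" if "t < \<tau> \<omega>" using that \<open>\<forall>s>t. _\<close> by auto
    ultimately show ?thesis by (cases "\<tau> \<omega> \<le> t") (auto simp: gamma_bridge_def min_absorb2)
  qed
  then have "?D \<subseteq> {\<omega>\<in>space M. \<not> ((\<forall>s>0. g 0 \<omega> < g s \<omega>) \<and> (\<forall>s>t. g t \<omega> < g s \<omega>))}"
    by blast
  then show ?thesis using null by (rule complete2)
qed

lemma space_completed_nat_filtration [simp]:
  "space (completed_nat_filtration M Y t) = space M"
  unfolding completed_nat_filtration_def by (simp add: space_measure_of_conv)

lemma sets_completed_nat_filtration:
  "sets (completed_nat_filtration M Y t) = sigma_sets (space M)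
     ((\<Union>s\<in>{0..t}. {Y s -` B \<inter> space M | B. B \<in> sets borel}) \<union> null_sets M)"
  unfolding completed_nat_filtration_def
  by (rule sets_measure_of) (use sets.sets_into_space in auto)

lemma completed_nat_filtration_mono:
  "t \<le> s \<Longrightarrow> sets (completed_nat_filtration M Y t) \<subseteq> sets (completed_nat_filtration M Y s)"
  unfolding sets_completed_nat_filtration by (rule sigma_sets_mono') force

lemma vimage_in_completed_nat_filtration:
  "0 \<le> s \<Longrightarrow> s \<le> t \<Longrightarrow> B \<in> sets borel \<Longrightarrow>
    Y s -` B \<inter> space M \<in> sets (completed_nat_filtration M Y t)"
  unfolding sets_completed_nat_filtration by (intro sigma_sets.Basic UnI1 UN_I[of s]) auto

lemma null_sets_in_completed_nat_filtration:
  "N \<in> null_sets M \<Longrightarrow> N \<in> sets (completed_nat_filtration M Y t)"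
  unfolding sets_completed_nat_filtration by (intro sigma_sets.Basic UnI2)

lemma completed_nat_filtration_null_sym_diff:
  assumes "complete_measure M" and B: "B \<in> sets (completed_nat_filtration M Y t)"
    and "(B - A) \<union> (A - B) \<in> null_sets M"
  shows "A \<in> sets (completed_nat_filtration M Y t)"
proof -
  interpret complete_measure M by fact
  have "A - B \<in> null_sets M" "B - A \<in> null_sets M"
    using assms(3) by (blast intro: complete2)+
  then have "A - B \<in> sets (completed_nat_filtration M Y t)" "B - A \<in> sets (completed_nat_filtration M Y t)"
    by (auto intro: null_sets_in_completed_nat_filtration)
  then have "(B - (B - A)) \<union> (A - B) \<in> sets (completed_nat_filtration M Y t)"
    using B by (meson sets.Un sets.Diff)
  also have "(B - (B - A)) \<union> (A - B) = A" by blast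
  finally show ?thesis .
qed

lemma stopping_time_completed_nat_filtration_plus:
  assumes "stopping_time (completed_nat_filtration M Y) T"
  shows "stopping_time (completed_nat_filtration_plus M Y) T"
  unfolding stopping_time_def pred_def
proof
  fix t
  let ?F = "completed_nat_filtration M Y"
  have "(\<Inter>s\<in>{t<..}. sets (?F s)) \<subseteq> sets (?F (t + 1))" by auto
  then have into_space: "(\<Inter>s\<in>{t<..}. sets (?F s)) \<subseteq> Pow (space M)"
    using sets.sets_into_space[of _ "?F (t + 1)"] by auto
  have "{\<omega>\<in>space M. T \<omega> \<le> t} \<in> sets (?F s)" if "t < s" for s
    using assms completed_nat_filtration_mono[of t s M Y] that
    unfolding stopping_time_def pred_def by auto
  then have "{\<omega>\<in>space M. T \<omega> \<le> t} \<in> sigma_sets (space M) (\<Inter>s\<in>{t<..}. sets (?F s))"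
    by (intro sigma_sets.Basic) auto
  then show "{\<omega>\<in>space (completed_nat_filtration_plus M Y t). T \<omega> \<le> t}
      \<in> sets (completed_nat_filtration_plus M Y t)"
    unfolding completed_nat_filtration_plus_def
    using sets_measure_of[OF into_space] by (simp add: space_measure_of_conv)
qed

theorem mainTheorem4:
  fixes M :: "'a measure" and g :: "real \<Rightarrow> 'a \<Rightarrow> real" and \<tau> :: "'a \<Rightarrow> real"
  assumes "prob_space M"
    and "complete_measure M"
    and "gamma_process M g"
    and "\<tau> \<in> borel_measurable M"
    and "\<forall>\<omega>\<in>space M. 0 < \<tau> \<omega>"
    and "prob_space.indep_set M (sets (vimage_algebra (space M) \<tau> borel))
         (sets (vimage_algebra (space M) (\<lambda>\<omega>. restrict (\<lambda>t. g t \<omega>) {0..}) (PiM {0..} (\<lambda>_. borel))))"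
  shows "(\<forall>t>0.
            ({\<omega>\<in>space M. gamma_bridge g \<tau> t \<omega> = 1} - {\<omega>\<in>space M. \<tau> \<omega> \<le> t}) \<union>
            ({\<omega>\<in>space M. \<tau> \<omega> \<le> t} - {\<omega>\<in>space M. gamma_bridge g \<tau> t \<omega> = 1}) \<in> null_sets M)
       \<and> stopping_time (completed_nat_filtration M (gamma_bridge g \<tau>)) \<tau>
       \<and> stopping_time (completed_nat_filtration_plus M (gamma_bridge g \<tau>)) \<tau>"
proof -
  let ?F = "completed_nat_filtration M (gamma_bridge g \<tau>)"
  note sym_diff_null = gamma_bridge_eq_1_sym_diff_null[OF assms(1,2,3,5)]
  have "{\<omega>\<in>space M. \<tau> \<omega> \<le> t} \<in> sets (?F t)" for t
  proof (cases "0 < t")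
    case True
    have "{\<omega>\<in>space M. gamma_bridge g \<tau> t \<omega> = 1} = gamma_bridge g \<tau> t -` {1} \<inter> space M"
      by auto
    also have "\<dots> \<in> sets (?F t)"
      using True by (intro vimage_in_completed_nat_filtration) auto
    finally show ?thesis
      using sym_diff_null[OF True] by (rule completed_nat_filtration_null_sym_diff[OF assms(2)])
  next
    case False
    then have "{\<omega>\<in>space M. \<tau> \<omega> \<le> t} = {}" using assms(5) by force
    then show ?thesis by (metis sets.empty_sets)
  qed
  then have stopping: "stopping_time ?F \<tau>" by (simp add: stopping_time_def pred_def)
  show ?thesis
    by (intro conjI allI impI sym_diff_null stopping stopping_time_completed_nat_filtration_plus)
qed

end
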